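(* In the $K$-armed setting ($K\ge3$) described in the context, with $\Sigma_t$ the adapted Gram matrix and $\hat\Sigma_t$ the empirical Gram matrix generated by the SA Lasso Bandit algorithm, for every $t\ge\frac{2\log(2d^2)}{C_1(s_0)^2}$, where $C_1(s_0)=\min\!\Big(\frac12,\frac{\phi_0^2}{256s_0\nu C_{\mathcal{X}}x_{\max}^2}\Big)$, $$\mathbb{P}\Big(\|\Sigma_t-\hat\Sigma_t\|_\infty\ge\frac{\phi_0^2}{32s_0\nu C_{\mathcal{X}}}\Big)\le\exp\Big\{-\frac{tC_1(s_0)^2}{2}\Big\}.$$
   Context: Setting: in round $t$ the agent observes $\mathcal{X}_t=\{X_{t,1},\dots,X_{t,K}\}\subset\mathbb{R}^d$, i.i.d. over $t$ with joint density $p_{\mathcal{X}}$ on $\mathbb{R}^{Kd}$. Rewards $Y_{t,i}=\mu(X_{t,i}^\top\beta^* )+\epsilon_{t,i}$, $\mu$ known increasing, $S_0=\{j:\beta^*_j\ne0\}$, $s_0=|S_0|$; noises independent, zero conditional mean, $\sigma$-sub-Gaussian. SA Lasso Bandit (input $\lambda_0$): from initial $\hat\beta_1$, choose $a_t=\arg\max_iX_{t,i}^\top\hat\beta_t$, observe $Y_t=Y_{t,a_t}$, set $\lambda_t=\lambda_0\sqrt{(4\log t+2\log d)/t}$, $\hat\beta_{t+1}\in\arg\min_\beta\{\ell_t(\beta)+\lambda_t\|\beta\|_1\}$ with $\ell_t(\beta)=-\frac1t\sum_{\tau\le t}[Y_\tau X_\tau^\top\beta-m(X_\tau^\top\beta)]$,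 $\dot m=\mu$, $X_\tau=X_{\tau,a_\tau}$. $\mathcal{F}_t$ generated by $a_{1:t},X_{1:t},Y_{1:t}$. $\Sigma_t=\frac1t\sum_{\tau\le t}\mathbb{E}[X_\tau X_\tau^\top\mid\mathcal{F}_{\tau-1}]$, $\hat\Sigma_t=\frac1t\sum_{\tau\le t}X_\tau X_\tau^\top$, $\|M\|_\infty=\max_{i,j}|M_{ij}|$. Standing assumptions: $\|x\|_2\le x_{\max}$ for all features; $\kappa_0\le\dot\mu\le\kappa_1$; compatibility: with $\Sigma=\frac1K\mathbb{E}[\sum_iX_{t,i}X_{t,i}^\top]$, $\phi_0^2\|\beta_{S_0}\|_1^2\le s_0\beta^\top\Sigma\beta$ whenever $\|\beta_{S_0^c}\|_1\le3\|\beta_{S_0}\|_1$, for some $\phi_0^2>0$; relaxed symmetry $p_{\mathcal{X}}(-\mathbf{x})/p_{\mathcal{X}}(\mathbf{x})\le\nu<\infty$; balanced covariance with constant $C_{\mathcal{X}}<\infty$: for every permutation $(i_1,\dots,i_K)$, $k\in\{2,\dots,K-1\}$ and fixed $\beta$, $\mathbb{E}[X_{i_k}X_{i_k}^\top\mathbb{1}\{X_{i_1}^\top\beta<\dots<X_{i_K}^\top\beta\}]\preccurlyeq C_{\mathcal{X}}\mathbb{E}[(X_{i_1}X_{i_1}^\top+X_{i_K}X_{i_K}^\top)\mathbb{1}\{X_{i_1}^\top\beta<\dots<X_{i_K}^\top\beta\}]$. *)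

theory Defs
  imports "HOL-Probability.Probability"
begin

definition gens :: "'a measure \<Rightarrow> ('i \<Rightarrow> 'a \<Rightarrow> 'b) \<Rightarrow> 'i set \<Rightarrow> 'b measure \<Rightarrow> 'a set set" where
  "gens M f I N = (\<Union>i\<in>I. {f i -` A \<inter> space M | A. A \<in> sets N})"

definition outer :: "real^'d \<Rightarrow> real^'d^'d" where
  "outer x = (\<chi> i j. x $ i * x $ j)"

definition mexp :: "'a measure \<Rightarrow> ('a \<Rightarrow> real^'d^'d) \<Rightarrow> real^'d^'d" where
  "mexp M F = (\<chi> i j. integral\<^sup>L M (\<lambda>w. F w $ i $ j))"

definition psd_le :: "real^'d^'d \<Rightarrow> real^'d^'d \<Rightarrow> bool" where
  "psd_le A B \<longleftrightarrow> (\<forall>v. v \<bullet> (A *v v) \<le> v \<bullet> (B *v v))"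

definition maxnorm :: "real^'d^'d \<Rightarrow> real" where
  "maxnorm A = Max {\<bar>A $ i $ j\<bar> | i j. True}"

definition l1_on :: "'d set \<Rightarrow> real^'d \<Rightarrow> real" where
  "l1_on S b = (\<Sum>j\<in>S. \<bar>b $ j\<bar>)"

definition chosen :: "(nat \<Rightarrow> 'w \<Rightarrow> real^'d^'k) \<Rightarrow> (nat \<Rightarrow> 'w \<Rightarrow> 'k) \<Rightarrow> nat \<Rightarrow> 'w \<Rightarrow> real^'d" where
  "chosen ctx a t w = ctx t w $ a t w"

definition reward :: "(real \<Rightarrow> real) \<Rightarrow> real^'d \<Rightarrow> (nat \<Rightarrow> 'w \<Rightarrow> real^'d^'k) \<Rightarrow> (nat \<Rightarrow> 'k \<Rightarrow> 'w \<Rightarrow> real)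
    \<Rightarrow> (nat \<Rightarrow> 'w \<Rightarrow> 'k) \<Rightarrow> nat \<Rightarrow> 'w \<Rightarrow> real" where
  "reward mu bstar ctx eps a t w = mu (chosen ctx a t w \<bullet> bstar) + eps t (a t w) w"

definition filt :: "'w measure \<Rightarrow> (real \<Rightarrow> real) \<Rightarrow> real^'d \<Rightarrow> (nat \<Rightarrow> 'w \<Rightarrow> real^'d^'k)
    \<Rightarrow> (nat \<Rightarrow> 'k \<Rightarrow> 'w \<Rightarrow> real) \<Rightarrow> (nat \<Rightarrow> 'w \<Rightarrow> 'k) \<Rightarrow> nat \<Rightarrow> 'w measure" where
  "filt M mu bstar ctx eps a t = sigma (space M)
     (gens M (\<lambda>s w. (a s w, chosen ctx a s w, reward mu bstar ctx eps a s w)) {1..t}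
        (count_space UNIV \<Otimes>\<^sub>M borel \<Otimes>\<^sub>M borel))"

(* information before the noise of round t is revealed:
   sigma(X_{s,i} : s \<le> t; eps_{s,i} : s < t) *)
definition noise_info :: "'w measure \<Rightarrow> (nat \<Rightarrow> 'w \<Rightarrow> real^'d^'k) \<Rightarrow> (nat \<Rightarrow> 'k \<Rightarrow> 'w \<Rightarrow> real)
    \<Rightarrow> nat \<Rightarrow> 'w measure" where
  "noise_info M ctx eps t = sigma (space M)
     (gens M ctx {1..t} borel \<union> gens M (\<lambda>(s,i). eps s i) ({1..<t} \<times> UNIV) borel)"

definition lasso_obj :: "(real \<Rightarrow> real) \<Rightarrow> real \<Rightarrow> (nat \<Rightarrow> real^'d) \<Rightarrow> (nat \<Rightarrow> real) \<Rightarrow> nat \<Rightarrow> real^'d \<Rightarrow> real" where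
  "lasso_obj m lam X Y t b =
     - (1 / real t) * (\<Sum>\<tau>=1..t. Y \<tau> * (X \<tau> \<bullet> b) - m (X \<tau> \<bullet> b)) + lam * l1_on UNIV b"

definition lam_t :: "real \<Rightarrow> nat \<Rightarrow> nat \<Rightarrow> real" where
  "lam_t lam0 d t = lam0 * sqrt ((4 * ln (real t) + 2 * ln (real d)) / real t)"

definition adapted_gram :: "'w measure \<Rightarrow> (nat \<Rightarrow> 'w measure) \<Rightarrow> (nat \<Rightarrow> 'w \<Rightarrow> real^'d) \<Rightarrow> nat \<Rightarrow> 'w \<Rightarrow> real^'d^'d" where
  "adapted_gram M F X t w = (\<chi> i j. (1 / real t) *
      (\<Sum>\<tau>=1..t. real_cond_exp M (F (\<tau> - 1)) (\<lambda>w'. X \<tau> w' $ i * X \<tau> w' $ j) w))"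

definition emp_gram :: "(nat \<Rightarrow> 'w \<Rightarrow> real^'d) \<Rightarrow> nat \<Rightarrow> 'w \<Rightarrow> real^'d^'d" where
  "emp_gram X t w = (\<chi> i j. (1 / real t) * (\<Sum>\<tau>=1..t. X \<tau> w $ i * X \<tau> w $ j))"

end

theory Submission
  imports Defs
begin

(* Entry (i,j) of Sigma_t - hat Sigma_t is -S_t / t, where S_t = sum_tau (Z_tau - E[Z_tau | F_(tau-1)]) with
   Z_tau = X_tau,i X_tau,j bounded by B = x_max^2; so S_t is a martingale with increments in [-2B, 2B].
   Because exp y <= 1 + y + y^2 for |y| <= 1, each increment multiplies E exp(l S) by at most
   1 + 4 l^2 B^2 <= exp(4 l^2 B^2) as long as 2 |l| B <= 1 (an Azuma-type bound).  The threshold equals 8 B C1',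
   C1' being the second argument of the min defining C1, so Markov's inequality with l = C1 / (4B) bounds each of
   the 2 d^2 one-sided entry deviations by exp(-t C1^2), and the lower bound on t pays for the union bound.
   Of the bandit assumptions only bounded features and the measurability of the algorithm matter; relaxed symmetry
   is used only to see that nu >= 0. *)

lemma exp_bound_abs_le_1:
  fixes y :: real
  assumes "\<bar>y\<bar> \<le> 1"
  shows "exp y \<le> 1 + y + y\<^sup>2"
proof (cases "0 \<le> y")
  case True
  then show ?thesis using exp_bound[of y] assms by simp
next
  case False
  \<comment> \<open>multiply by \<open>exp (-y) \<ge> 1 - y\<close>, using \<open>(1 + y + y\<^sup>2) (1 - y) = 1 - y\<^sup>3 \<ge> 1\<close>\<close>
  have "0 \<le> 1 + y + y\<^sup>2"
    using zero_le_power2[of "2 * y + 1"] by (simp add: power2_eq_square algebra_simps)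
  then have "(1 + y + y\<^sup>2) * (1 - y) \<le> (1 + y + y\<^sup>2) * exp (- y)"
    using exp_ge_add_one_self[of "- y"] by (intro mult_left_mono) simp_all
  moreover have "(1 + y + y\<^sup>2) * (1 - y) = 1 - y ^ 3"
    by (simp add: algebra_simps power2_eq_square power3_eq_cube)
  moreover have "y ^ 3 \<le> 0"
    using False mult_nonpos_nonneg[of y "y\<^sup>2"] by (simp add: power3_eq_cube power2_eq_square)
  ultimately have "1 \<le> (1 + y + y\<^sup>2) * exp (- y)" by linarith
  then show ?thesis by (simp add: exp_minus field_simps)
qed

locale bounded_adapted_process = prob_space M for M :: "'a measure" +
  fixes G :: "nat \<Rightarrow> 'a measure" and Z :: "nat \<Rightarrow> 'a \<Rightarrow> real" and B :: real
  assumes subalgebra_G: "\<And>n. subalgebra M (G n)"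
    and sets_G_mono: "\<And>n m. n \<le> m \<Longrightarrow> sets (G n) \<subseteq> sets (G m)"
    and adapted: "\<And>n. 1 \<le> n \<Longrightarrow> Z n \<in> borel_measurable (G n)"
    and bounded: "\<And>n w. w \<in> space M \<Longrightarrow> \<bar>Z n w\<bar> \<le> B"
begin

definition compensated_sum :: "nat \<Rightarrow> 'a \<Rightarrow> real" where
  "compensated_sum t w = (\<Sum>\<tau>=1..t. Z \<tau> w - real_cond_exp M (G (\<tau> - 1)) (Z \<tau>) w)"

lemma sigma_finite_subalgebra_G: "sigma_finite_subalgebra M (G n)"
  by (rule finite_measure_subalgebra_is_sigma_finite)
    (simp add: finite_measure_subalgebra_def finite_measure_subalgebra_axioms_def
      subalgebra_G finite_measure_axioms)

lemma measurable_G_mono: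
  assumes "f \<in> borel_measurable (G n)" and "n \<le> m"
  shows "f \<in> borel_measurable (G m)"
proof -
  have "subalgebra (G m) (G n)"
    using subalgebra_G[of n] subalgebra_G[of m] sets_G_mono[OF assms(2)]
    by (simp add: subalgebra_def)
  then show ?thesis using assms(1) by (rule measurable_from_subalg)
qed

lemma borel_measurable_Z: "1 \<le> n \<Longrightarrow> Z n \<in> borel_measurable M"
  using measurable_from_subalg[OF subalgebra_G adapted] .

lemma integrable_Z: "1 \<le> n \<Longrightarrow> integrable M (Z n)"
  using bounded by (intro integrable_const_bound[where B = B] AE_I2 borel_measurable_Z) simp_all

lemma compensated_increment_bounded:
  assumes "1 \<le> n"
  shows "AE w in M. \<bar>Z n w - real_cond_exp M (G m) (Z n) w\<bar> \<le> 2 * B"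
proof -
  interpret sigma_finite_subalgebra M "G m" by (rule sigma_finite_subalgebra_G)
  have Z_between: "- B \<le> Z n w \<and> Z n w \<le> B" if "w \<in> space M" for w
    using bounded[OF that, of n] by linarith
  have "AE w in M. real_cond_exp M (G m) (Z n) w \<le> B"
    using Z_between integrable_Z[OF assms] by (intro real_cond_exp_le_c AE_I2) auto
  moreover have "AE w in M. - B \<le> real_cond_exp M (G m) (Z n) w"
    using Z_between integrable_Z[OF assms] by (intro real_cond_exp_ge_c AE_I2) auto
  ultimately show ?thesis
    using AE_space
  proof eventually_elim
    case (elim w)
    then show ?case using Z_between[of w] by linarith
  qed
qed

lemma compensated_sum_Suc:
  "compensated_sum (Suc t) w = compensated_sum t w + (Z (Suc t) w - real_cond_exp M (G t) (Z (Suc t)) w)"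
  unfolding compensated_sum_def by simp

lemma compensated_sum_adapted: "compensated_sum t \<in> borel_measurable (G t)"
proof (induction t)
  case 0
  then show ?case by (simp add: compensated_sum_def)
next
  case (Suc t)
  have "real_cond_exp M (G t) (Z (Suc t)) \<in> borel_measurable (G (Suc t))"
    by (rule measurable_G_mono[OF borel_measurable_cond_exp]) simp
  moreover have "compensated_sum t \<in> borel_measurable (G (Suc t))"
    using Suc.IH by (rule measurable_G_mono) simp
  ultimately show ?case
    using adapted[of "Suc t"] by (simp add: compensated_sum_Suc[abs_def])
qed

lemma borel_measurable_compensated_sum[measurable]: "compensated_sum t \<in> borel_measurable M"
  using measurable_from_subalg[OF subalgebra_G compensated_sum_adapted] .

lemma compensated_sum_bounded: "AE w in M. \<bar>compensated_sum t w\<bar> \<le> 2 * B * t"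
proof (induction t)
  case 0
  then show ?case by (simp add: compensated_sum_def)
next
  case (Suc t)
  moreover have "AE w in M. \<bar>Z (Suc t) w - real_cond_exp M (G t) (Z (Suc t)) w\<bar> \<le> 2 * B"
    by (rule compensated_increment_bounded) simp
  ultimately show ?case
  proof eventually_elim
    case (elim w)
    then show ?case
      using abs_triangle_ineq[of "compensated_sum t w"]
      unfolding compensated_sum_Suc of_nat_Suc ring_distribs by linarith
  qed
qed

lemma integrable_exp_compensated_sum: "integrable M (\<lambda>w. exp (l * compensated_sum t w))"
proof (rule integrable_const_bound[where B = "exp (\<bar>l\<bar> * (2 * B * t))"])
  show "AE w in M. norm (exp (l * compensated_sum t w)) \<le> exp (\<bar>l\<bar> * (2 * B * t))"
    using compensated_sum_bounded[of t]
  proof eventually_elim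
    case (elim w)
    have "l * compensated_sum t w \<le> \<bar>l\<bar> * \<bar>compensated_sum t w\<bar>"
      by (metis abs_ge_self abs_mult)
    also have "\<dots> \<le> \<bar>l\<bar> * (2 * B * t)"
      using elim by (intro mult_left_mono) auto
    finally show ?case by simp
  qed
qed (use borel_measurable_compensated_sum[of t] in simp)

lemma compensated_sum_mgf_step:
  assumes l: "\<bar>l\<bar> * (2 * B) \<le> 1"
  shows "(\<integral>w. exp (l * compensated_sum (Suc t) w) \<partial>M)
           \<le> (1 + 4 * l\<^sup>2 * B\<^sup>2) * (\<integral>w. exp (l * compensated_sum t w) \<partial>M)"
proof -
  interpret sigma_finite_subalgebra M "G t" by (rule sigma_finite_subalgebra_G)
  define f where "f w = exp (l * compensated_sum t w)" for w
  define Z' where "Z' = Z (Suc t)"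
  define E where "E = real_cond_exp M (G t) Z'"
  define c where "c = 1 + 4 * l\<^sup>2 * B\<^sup>2"
  have f_G: "f \<in> borel_measurable (G t)"
    unfolding f_def using compensated_sum_adapted[of t] by measurable
  have f_int: "integrable M f"
    unfolding f_def by (rule integrable_exp_compensated_sum)
  have Z'_M: "Z' \<in> borel_measurable M"
    unfolding Z'_def by (rule borel_measurable_Z) simp
  have fZ'_int: "integrable M (\<lambda>w. f w * Z' w)"
  proof (rule Bochner_Integration.integrable_bound[OF integrable_mult_right[OF f_int, of B]])
    show "AE w in M. norm (f w * Z' w) \<le> norm (B * f w)"
      using order_trans[OF bounded abs_ge_self] unfolding Z'_def f_def
      by (intro AE_I2) (simp add: abs_mult mult.commute mult_left_mono)
  qed (use f_int Z'_M in measurable)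
  \<comment> \<open>\<open>f\<close> is \<open>G t\<close>-measurable, so the linear term of the expansion below integrates to zero\<close>
  note fE = real_cond_exp_intg[OF fZ'_int f_G Z'_M, folded E_def]
  have "AE w in M. \<bar>Z' w - E w\<bar> \<le> 2 * B"
    unfolding Z'_def E_def by (rule compensated_increment_bounded) simp
  then have "AE w in M. exp (l * compensated_sum (Suc t) w) \<le> c * f w + l * (f w * Z' w) - l * (f w * E w)"
  proof eventually_elim
    case (elim w)
    define y where "y = l * (Z' w - E w)"
    have y_bound: "\<bar>y\<bar> \<le> \<bar>l\<bar> * (2 * B)"
      unfolding y_def abs_mult using elim by (intro mult_left_mono) simp_all
    then have y_le_1: "\<bar>y\<bar> \<le> 1"
      using l by linarith
    have "y\<^sup>2 \<le> (\<bar>l\<bar> * (2 * B))\<^sup>2"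
      using power_mono[OF y_bound, of 2] by simp
    then have y_sq: "y\<^sup>2 \<le> 4 * l\<^sup>2 * B\<^sup>2"
      by (simp add: power_mult_distrib)
    have "exp (l * compensated_sum (Suc t) w) = f w * exp y"
      unfolding f_def y_def Z'_def E_def compensated_sum_Suc by (simp add: distrib_left exp_add)
    also have "\<dots> \<le> f w * (1 + y + y\<^sup>2)"
      unfolding f_def by (intro mult_left_mono exp_bound_abs_le_1 y_le_1) simp
    also have "\<dots> \<le> f w * (c + y)"
      unfolding f_def c_def using y_sq by (intro mult_left_mono) simp_all
    also have "\<dots> = c * f w + l * (f w * Z' w) - l * (f w * E w)"
      unfolding y_def by (simp add: algebra_simps)
    finally show ?case .
  qed
  then have "(\<integral>w. exp (l * compensated_sum (Suc t) w) \<partial>M)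
      \<le> (\<integral>w. c * f w + l * (f w * Z' w) - l * (f w * E w) \<partial>M)"
    by (intro integral_mono_AE integrable_exp_compensated_sum Bochner_Integration.integrable_diff
        Bochner_Integration.integrable_add integrable_mult_right f_int fZ'_int fE(1))
  also have "\<dots> = c * (\<integral>w. f w \<partial>M)"
    using f_int fZ'_int fE by simp
  finally show ?thesis unfolding c_def f_def .
qed

lemma compensated_sum_mgf_le:
  assumes "\<bar>l\<bar> * (2 * B) \<le> 1"
  shows "(\<integral>w. exp (l * compensated_sum t w) \<partial>M) \<le> (1 + 4 * l\<^sup>2 * B\<^sup>2) ^ t"
proof (induction t)
  case 0
  then show ?case by (simp add: compensated_sum_def prob_space)
next
  case (Suc t)
  have "(\<integral>w. exp (l * compensated_sum (Suc t) w) \<partial>M)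
      \<le> (1 + 4 * l\<^sup>2 * B\<^sup>2) * (\<integral>w. exp (l * compensated_sum t w) \<partial>M)"
    by (rule compensated_sum_mgf_step[OF assms])
  also have "\<dots> \<le> (1 + 4 * l\<^sup>2 * B\<^sup>2) * (1 + 4 * l\<^sup>2 * B\<^sup>2) ^ t"
    using Suc.IH by (rule mult_left_mono) simp
  finally show ?case by simp
qed

lemma compensated_sum_tail_le:
  assumes "\<bar>l\<bar> * (2 * B) \<le> 1"
  shows "measure M {w \<in> space M. x \<le> l * compensated_sum t w} \<le> exp (4 * l\<^sup>2 * B\<^sup>2 * t - x)"
proof -
  have "measure M {w \<in> space M. x \<le> l * compensated_sum t w}
      = measure M {w \<in> space M. exp x \<le> exp (l * compensated_sum t w)}"
    by simp
  also have "\<dots> \<le> (\<integral>w. exp (l * compensated_sum t w) \<partial>M) / exp x"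
    by (rule integral_Markov_inequality_measure[OF integrable_exp_compensated_sum, of "space M"]) auto
  also have "\<dots> \<le> (1 + 4 * l\<^sup>2 * B\<^sup>2) ^ t / exp x"
    by (intro divide_right_mono compensated_sum_mgf_le assms) simp
  also have "\<dots> \<le> exp (4 * l\<^sup>2 * B\<^sup>2) ^ t / exp x"
    by (intro divide_right_mono power_mono exp_ge_add_one_self) simp_all
  also have "\<dots> = exp (4 * l\<^sup>2 * B\<^sup>2 * t - x)"
    by (simp add: exp_diff mult.commute flip: exp_of_nat_mult)
  finally show ?thesis .
qed

lemma compensated_sum_abs_tail_le:
  assumes "0 < l" and "l * (2 * B) \<le> 1"
  shows "measure M {w \<in> space M. x \<le> \<bar>compensated_sum t w\<bar>} \<le> 2 * exp (4 * l\<^sup>2 * B\<^sup>2 * t - l * x)"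
proof -
  have sets_tail: "{w \<in> space M. c \<le> r * compensated_sum t w} \<in> sets M" for c r
    by measurable
  have "l * x \<le> l * s \<or> l * x \<le> - l * s" if "x \<le> \<bar>s\<bar>" for s
    using that assms(1) mult_left_mono[of x s l] mult_left_mono[of x "- s" l]
    by (cases "0 \<le> s") auto
  then have "{w \<in> space M. x \<le> \<bar>compensated_sum t w\<bar>}
      \<subseteq> {w \<in> space M. l * x \<le> l * compensated_sum t w} \<union> {w \<in> space M. l * x \<le> - l * compensated_sum t w}"
    by blast
  then have "measure M {w \<in> space M. x \<le> \<bar>compensated_sum t w\<bar>}
      \<le> measure M {w \<in> space M. l * x \<le> l * compensated_sum t w}
        + measure M {w \<in> space M. l * x \<le> - l * compensated_sum t w}"
    using sets_tail by (intro order_trans[OF finite_measure_mono measure_subadditive]) auto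
  also have "\<dots> \<le> exp (4 * l\<^sup>2 * B\<^sup>2 * t - l * x) + exp (4 * (- l)\<^sup>2 * B\<^sup>2 * t - l * x)"
    using assms by (intro add_mono compensated_sum_tail_le) simp_all
  finally show ?thesis by simp
qed

end

lemma maxnorm_ge_iff: "c \<le> maxnorm A \<longleftrightarrow> (\<exists>i j. c \<le> \<bar>A $ i $ j\<bar>)"
proof -
  have "{\<bar>A $ i $ j\<bar> | i j. True} = (\<lambda>(i, j). \<bar>A $ i $ j\<bar>) ` UNIV"
    by auto
  then show ?thesis
    unfolding maxnorm_def by (subst Max_ge_iff) auto
qed

lemma adapted_gram_minus_emp_gram:
  "(adapted_gram M F X t w - emp_gram X t w) $ i $ j
     = - (\<Sum>\<tau>=1..t. X \<tau> w $ i * X \<tau> w $ j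
            - real_cond_exp M (F (\<tau> - 1)) (\<lambda>w'. X \<tau> w' $ i * X \<tau> w' $ j) w) / t"
  unfolding adapted_gram_def emp_gram_def by (simp add: sum_subtractf diff_divide_distrib)

lemma gram_deviation_tail_le:
  fixes X :: "nat \<Rightarrow> 'a \<Rightarrow> real^'d"
  assumes "prob_space M"
    and "\<And>n. subalgebra M (F n)" and "\<And>n m. n \<le> m \<Longrightarrow> sets (F n) \<subseteq> sets (F m)"
    and X_adapted: "\<And>n. 1 \<le> n \<Longrightarrow> X n \<in> borel_measurable (F n)"
    and X_bounded: "\<And>n w. w \<in> space M \<Longrightarrow> norm (X n w) \<le> xmax"
    and l: "0 < l" "l * (2 * xmax\<^sup>2) \<le> 1" and t: "0 < t"
  shows "measure M {w \<in> space M. \<gamma> \<le> maxnorm (adapted_gram M F X t w - emp_gram X t w)}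
           \<le> 2 * real CARD('d) ^ 2 * exp (4 * l\<^sup>2 * (xmax\<^sup>2)\<^sup>2 * t - l * (t * \<gamma>))"
proof -
  interpret prob_space M by fact
  define Z where "Z i j n = (\<lambda>w. X n w $ i * X n w $ j)" for i j n
  have process: "bounded_adapted_process M F (Z i j) (xmax\<^sup>2)" for i j
  proof unfold_locales
    show "Z i j n \<in> borel_measurable (F n)" if "1 \<le> n" for n
      unfolding Z_def
      by (intro borel_measurable_times measurable_compose[OF X_adapted[OF that] borel_measurable_nth])
    show "\<bar>Z i j n w\<bar> \<le> xmax\<^sup>2" if "w \<in> space M" for n w
      unfolding Z_def abs_mult power2_eq_square using X_bounded[OF that, of n]
      by (intro mult_mono component_le_norm_cart[THEN order_trans])
        (auto intro: norm_ge_zero[THEN order_trans])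
  qed fact+
  define S where "S i j = bounded_adapted_process.compensated_sum M F (Z i j) t" for i j
  have S_meas: "S i j \<in> borel_measurable M" for i j
    unfolding S_def by (rule bounded_adapted_process.borel_measurable_compensated_sum[OF process])
  have entry: "\<bar>(adapted_gram M F X t w - emp_gram X t w) $ i $ j\<bar> = \<bar>S i j w\<bar> / t" for i j w
    unfolding adapted_gram_minus_emp_gram S_def Z_def
      bounded_adapted_process.compensated_sum_def[OF process]
    by simp
  have "\<gamma> \<le> maxnorm (adapted_gram M F X t w - emp_gram X t w) \<longleftrightarrow> (\<exists>i j. t * \<gamma> \<le> \<bar>S i j w\<bar>)" for w
    using t by (simp only: maxnorm_ge_iff entry pos_le_divide_eq of_nat_0_less_iff mult.commute)
  then have "{w \<in> space M. \<gamma> \<le> maxnorm (adapted_gram M F X t w - emp_gram X t w)}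
      = (\<Union>p. {w \<in> space M. t * \<gamma> \<le> \<bar>S (fst p) (snd p) w\<bar>})"
    by fastforce
  also have "measure M \<dots> \<le> (\<Sum>p\<in>UNIV. measure M {w \<in> space M. t * \<gamma> \<le> \<bar>S (fst p) (snd p) w\<bar>})"
    using S_meas by (intro finite_measure_subadditive_finite) auto
  also have "\<dots> \<le> (\<Sum>(p :: 'd \<times> 'd)\<in>UNIV. 2 * exp (4 * l\<^sup>2 * (xmax\<^sup>2)\<^sup>2 * t - l * (t * \<gamma>)))"
    unfolding S_def using l
    by (intro sum_mono bounded_adapted_process.compensated_sum_abs_tail_le[OF process])
  finally show ?thesis
    by (simp add: power2_eq_square)
qed

lemma gram_deviation_tail_exp_le:
  fixes X :: "nat \<Rightarrow> 'a \<Rightarrow> real^'d"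
  assumes "prob_space M"
    and "\<And>n. subalgebra M (F n)" and "\<And>n m. n \<le> m \<Longrightarrow> sets (F n) \<subseteq> sets (F m)"
    and "\<And>n. 1 \<le> n \<Longrightarrow> X n \<in> borel_measurable (F n)"
    and "\<And>n w. w \<in> space M \<Longrightarrow> norm (X n w) \<le> xmax"
    and xmax: "0 < xmax" and c: "0 < c" "c \<le> 1/2" "c \<le> c'"
    and t: "2 * ln (2 * real CARD('d) ^ 2) / c\<^sup>2 \<le> t"
  shows "measure M {w \<in> space M. 8 * xmax\<^sup>2 * c' \<le> maxnorm (adapted_gram M F X t w - emp_gram X t w)}
           \<le> exp (- (t * c\<^sup>2 / 2))"
proof -
  define l where "l = c / (4 * xmax\<^sup>2)"
  have "1 \<le> real CARD('d) ^ 2"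
    by (simp add: one_le_power Suc_leI)
  then have ln_pos: "0 < ln (2 * real CARD('d) ^ 2)"
    by (intro ln_gt_zero) linarith
  have u: "2 * ln (2 * real CARD('d) ^ 2) \<le> t * c\<^sup>2"
    using t c by (simp add: pos_divide_le_eq)
  then have "0 < t"
    using ln_pos by (cases "t = 0") auto
  then have "measure M {w \<in> space M. 8 * xmax\<^sup>2 * c' \<le> maxnorm (adapted_gram M F X t w - emp_gram X t w)}
      \<le> 2 * real CARD('d) ^ 2 * exp (4 * l\<^sup>2 * (xmax\<^sup>2)\<^sup>2 * t - l * (t * (8 * xmax\<^sup>2 * c')))"
    using assms unfolding l_def by (intro gram_deviation_tail_le) simp_all
  also have "\<dots> \<le> 2 * real CARD('d) ^ 2 * exp (- (t * c\<^sup>2))"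
  proof -
    have "4 * l\<^sup>2 * (xmax\<^sup>2)\<^sup>2 * t - l * (t * (8 * xmax\<^sup>2 * c')) = t * c * c / 4 - 2 * (t * c * c')"
      using xmax unfolding l_def by (simp add: power2_eq_square field_simps)
    also have "\<dots> \<le> - (t * c * c)"
    proof -
      have "0 \<le> t * c * c" and "t * c * c \<le> t * c * c'"
        using c(1) mult_left_mono[OF c(3), of "t * c"] by simp_all
      then show ?thesis by linarith
    qed
    finally show ?thesis
      by (simp add: power2_eq_square mult.assoc)
  qed
  also have "\<dots> \<le> exp (t * c\<^sup>2 / 2) * exp (- (t * c\<^sup>2))"
  proof (intro mult_right_mono)
    have "2 * real CARD('d) ^ 2 = exp (ln (2 * real CARD('d) ^ 2))"
      by simp
    also have "\<dots> \<le> exp (t * c\<^sup>2 / 2)"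
      unfolding exp_le_cancel_iff using u by linarith
    finally show "2 * real CARD('d) ^ 2 \<le> exp (t * c\<^sup>2 / 2)" .
  qed simp
  also have "\<dots> = exp (- (t * c\<^sup>2 / 2))"
    by (simp flip: exp_add)
  finally show ?thesis .
qed

lemma sets_sigma_gens: "sets (sigma (space M) (gens M h I N)) = sigma_sets (space M) (gens M h I N)"
  by (rule sets_measure_of) (auto simp: gens_def)

lemma subalgebra_sigma_gens:
  assumes "\<And>i. i \<in> I \<Longrightarrow> h i \<in> measurable M N"
  shows "subalgebra M (sigma (space M) (gens M h I N))"
proof -
  have "gens M h I N \<subseteq> sets M"
    using measurable_sets[OF assms] unfolding gens_def by auto
  then show ?thesis
    unfolding subalgebra_def sets_sigma_gens by (simp add: space_measure_of_conv sets.sigma_sets_subset)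
qed

lemma sets_sigma_gens_mono:
  "I \<subseteq> J \<Longrightarrow> sets (sigma (space M) (gens M h I N)) \<subseteq> sets (sigma (space M) (gens M h J N))"
  unfolding sets_sigma_gens by (intro sigma_sets_mono') (auto simp: gens_def)

lemma measurable_sigma_gens:
  assumes "i \<in> I" and "h i \<in> measurable M N"
  shows "h i \<in> measurable (sigma (space M) (gens M h I N)) N"
proof (rule measurableI)
  show "h i w \<in> space N" if "w \<in> space (sigma (space M) (gens M h I N))" for w
    using that measurable_space[OF assms(2)] by (simp add: space_measure_of_conv)
  show "h i -` A \<inter> space (sigma (space M) (gens M h I N)) \<in> sets (sigma (space M) (gens M h I N))"
    if "A \<in> sets N" for A
    using that assms(1) unfolding sets_sigma_gens gens_def by (auto simp: space_measure_of_conv)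
qed

lemma borel_measurable_vec_nth: "(\<lambda>x :: 'a :: real_normed_vector ^ 'n. x $ i) \<in> borel_measurable borel"
  by (intro borel_measurable_continuous_onI continuous_intros)

context
  fixes M :: "'w measure" and ctx :: "nat \<Rightarrow> 'w \<Rightarrow> real^'d^'k" and a :: "nat \<Rightarrow> 'w \<Rightarrow> 'k"
    and eps :: "nat \<Rightarrow> 'k \<Rightarrow> 'w \<Rightarrow> real" and mu :: "real \<Rightarrow> real" and bstar :: "real^'d"
  assumes ctx_meas: "\<And>t. ctx t \<in> borel_measurable M"
    and a_meas: "\<And>t. a t \<in> measurable M (count_space UNIV)"
    and eps_meas: "\<And>t i. eps t i \<in> borel_measurable M"
    and mu_cont: "continuous_on UNIV mu"
begin

lemma borel_measurable_chosen: "chosen ctx a t \<in> borel_measurable M"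
  unfolding chosen_def
  by (rule measurable_compose_countable'[OF measurable_compose[OF ctx_meas borel_measurable_vec_nth] a_meas])
    simp_all

lemma borel_measurable_reward: "reward mu bstar ctx eps a t \<in> borel_measurable M"
proof -
  have [measurable]: "mu \<in> borel_measurable borel"
    using mu_cont by (rule borel_measurable_continuous_onI)
  have [measurable]: "(\<lambda>w. eps t (a t w) w) \<in> borel_measurable M"
    by (rule measurable_compose_countable'[OF eps_meas a_meas]) simp
  show ?thesis
    unfolding reward_def using borel_measurable_chosen[of t] by measurable
qed

lemma measurable_observation:
  "(\<lambda>w. (a t w, chosen ctx a t w, reward mu bstar ctx eps a t w))
     \<in> measurable M (count_space UNIV \<Otimes>\<^sub>M borel \<Otimes>\<^sub>M borel)"
  by (intro measurable_Pair a_meas borel_measurable_chosen borel_measurable_reward)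

lemma subalgebra_filt: "subalgebra M (filt M mu bstar ctx eps a n)"
  unfolding filt_def by (intro subalgebra_sigma_gens measurable_observation)

lemma sets_filt_mono: "n \<le> m \<Longrightarrow> sets (filt M mu bstar ctx eps a n) \<subseteq> sets (filt M mu bstar ctx eps a m)"
  unfolding filt_def by (intro sets_sigma_gens_mono) auto

lemma borel_measurable_chosen_filt:
  assumes "1 \<le> t"
  shows "chosen ctx a t \<in> borel_measurable (filt M mu bstar ctx eps a t)"
proof -
  have "(\<lambda>w. (a t w, chosen ctx a t w, reward mu bstar ctx eps a t w))
      \<in> measurable (filt M mu bstar ctx eps a t) (count_space UNIV \<Otimes>\<^sub>M borel \<Otimes>\<^sub>M borel)"
    unfolding filt_def using assms by (intro measurable_sigma_gens measurable_observation) simp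
  then show ?thesis
    by measurable
qed

lemma chosen_gram_deviation_tail_le:
  assumes "prob_space M"
    and "\<And>t i w. w \<in> space M \<Longrightarrow> norm (ctx t w $ i) \<le> xmax"
    and "0 < xmax" and "0 < c" "c \<le> 1/2" "c \<le> c'"
    and "2 * ln (2 * real CARD('d) ^ 2) / c\<^sup>2 \<le> t"
  shows "measure M {w \<in> space M. 8 * xmax\<^sup>2 * c' \<le>
             maxnorm (adapted_gram M (filt M mu bstar ctx eps a) (chosen ctx a) t w - emp_gram (chosen ctx a) t w)}
           \<le> exp (- (t * c\<^sup>2 / 2))"
  using assms
  by (intro gram_deviation_tail_exp_le subalgebra_filt sets_filt_mono borel_measurable_chosen_filt)
    (auto simp: chosen_def)

end

lemma density_reflection_bound_nonneg:
  fixes p :: "'b :: euclidean_space \<Rightarrow> ennreal"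
  assumes "prob_space M" and "distributed M lborel Y p" and "\<And>x. p (- x) \<le> ennreal \<nu> * p x"
  shows "0 \<le> \<nu>"
proof (rule ccontr)
  assume "\<not> 0 \<le> \<nu>"
  then have "p x = 0" for x
    using assms(3)[of "- x"] by (simp add: ennreal_neg)
  then have "emeasure M (Y -` UNIV \<inter> space M) = 0"
    using distributed_emeasure[OF assms(2), of UNIV] by simp
  then show False
    using prob_space.emeasure_space_1[OF assms(1)] by simp
qed

theorem corollary4:
  fixes M :: "'w measure"
    and ctx :: "nat \<Rightarrow> 'w \<Rightarrow> real^'d^'k"          \<comment> \<open>context X_t = (X_{t,i})_i\<close>
    and p :: "real^'d^'k \<Rightarrow> ennreal"                 \<comment> \<open>joint density on R^{Kd}\<close>
    and eps :: "nat \<Rightarrow> 'k \<Rightarrow> 'w \<Rightarrow> real"           \<comment> \<open>noises eps_{t,i}\<close>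
    and sig :: real
    and mu mu' m :: "real \<Rightarrow> real" and kappa0 kappa1 :: real
    and bstar :: "real^'d" and xmax phi0 nu CX lam0 :: real
    and a :: "nat \<Rightarrow> 'w \<Rightarrow> 'k"                       \<comment> \<open>chosen arms\<close>
    and bhat :: "nat \<Rightarrow> 'w \<Rightarrow> real^'d"               \<comment> \<open>Lasso estimates\<close>
    and beta1 :: "real^'d"                            \<comment> \<open>initial estimate\<close>
  defines "K \<equiv> CARD('k)" and "d \<equiv> CARD('d)"
    and "S0 \<equiv> {j. bstar $ j \<noteq> 0}" and "s0 \<equiv> card {j. bstar $ j \<noteq> 0}"
    and "X \<equiv> chosen ctx a" and "Y \<equiv> reward mu bstar ctx eps a"
    and "F \<equiv> filt M mu bstar ctx eps a"
    and "Sig0 \<equiv> (\<chi> j l. (1 / real CARD('k)) *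
                   (\<Sum>i\<in>UNIV. integral\<^sup>L M (\<lambda>w. ctx 1 w $ i $ j * ctx 1 w $ i $ l)))"
    and "C1 \<equiv> min (1/2) (phi0^2 / (256 * real (card {j. bstar $ j \<noteq> 0}) * nu * CX * xmax^2))"
  assumes prob: "prob_space M"
    and K3: "CARD('k) \<ge> 3"
    \<comment> \<open>contexts i.i.d. over t with joint density p\<close>
    and ctx_dens: "\<And>t. distributed M lborel (ctx t) p"
    and ctx_indep: "prob_space.indep_vars M (\<lambda>_. borel) ctx UNIV"
    \<comment> \<open>noises: independent, zero conditional mean, sigma-sub-Gaussian\<close>
    and eps_meas: "\<And>t i. eps t i \<in> borel_measurable M"
    and eps_indep: "prob_space.indep_vars M (\<lambda>_. borel) (\<lambda>(t,i). eps t i) UNIV"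
    and eps_mean: "\<And>t i. AE w in M. real_cond_exp M (noise_info M ctx eps t) (eps t i) w = 0"
    and eps_subg: "\<And>t i l. integrable M (\<lambda>w. exp (l * eps t i w)) \<and>
         (AE w in M. real_cond_exp M (noise_info M ctx eps t) (\<lambda>w. exp (l * eps t i w)) w
                      \<le> exp (l^2 * sig^2 / 2))"
    \<comment> \<open>link function\<close>
    and mu_deriv: "\<And>x. (mu has_real_derivative mu' x) (at x)"
    and kappa: "\<And>x. kappa0 \<le> mu' x \<and> mu' x \<le> kappa1" and kappa0_pos: "0 < kappa0"
    and m_deriv: "\<And>x. (m has_real_derivative mu x) (at x)"
    \<comment> \<open>bounded features\<close>
    and xmax: "\<And>t i w. w \<in> space M \<Longrightarrow> norm (ctx t w $ i) \<le> xmax"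
    \<comment> \<open>compatibility condition\<close>
    and phi0_pos: "phi0^2 > 0"
    and compat: "\<And>b. l1_on (- S0) b \<le> 3 * l1_on S0 b \<Longrightarrow>
                      phi0^2 * (l1_on S0 b)^2 \<le> real s0 * (b \<bullet> (Sig0 *v b))"
    \<comment> \<open>relaxed symmetry\<close>
    and symm: "\<And>x. p (- x) \<le> ennreal nu * p x"
    \<comment> \<open>balanced covariance\<close>
    and CX_pos: "0 < CX"
    and balanced: "\<And>\<pi> k b. bij_betw \<pi> {1..CARD('k)} (UNIV :: 'k set) \<Longrightarrow> 2 \<le> k \<Longrightarrow> k \<le> CARD('k) - 1 \<Longrightarrow>
        psd_le
          (mexp M (\<lambda>w. (if \<forall>r\<in>{1..<CARD('k)}. ctx 1 w $ \<pi> r \<bullet> b < ctx 1 w $ \<pi> (r+1) \<bullet> b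
                         then outer (ctx 1 w $ \<pi> k) else 0)))
          (CX *\<^sub>R mexp M (\<lambda>w. (if \<forall>r\<in>{1..<CARD('k)}. ctx 1 w $ \<pi> r \<bullet> b < ctx 1 w $ \<pi> (r+1) \<bullet> b
                         then outer (ctx 1 w $ \<pi> 1) + outer (ctx 1 w $ \<pi> CARD('k)) else 0)))"
    \<comment> \<open>SA Lasso Bandit (measurable realisation of argmax / argmin)\<close>
    and a_meas: "\<And>t. a t \<in> measurable M (count_space UNIV)"
    and bhat_meas: "\<And>t. bhat t \<in> borel_measurable M"
    and bhat1: "\<And>w. w \<in> space M \<Longrightarrow> bhat 1 w = beta1"
    and a_argmax: "\<And>t w i. 1 \<le> t \<Longrightarrow> w \<in> space M \<Longrightarrow> ctx t w $ i \<bullet> bhat t w \<le> ctx t w $ a t w \<bullet> bhat t w"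
    and bhat_argmin: "\<And>t w b. 1 \<le> t \<Longrightarrow> w \<in> space M \<Longrightarrow>
        lasso_obj m (lam_t lam0 CARD('d) t) (\<lambda>\<tau>. X \<tau> w) (\<lambda>\<tau>. Y \<tau> w) t (bhat (t+1) w)
        \<le> lasso_obj m (lam_t lam0 CARD('d) t) (\<lambda>\<tau>. X \<tau> w) (\<lambda>\<tau>. Y \<tau> w) t b"
  shows "\<forall>t::nat. real t \<ge> 2 * ln (2 * real d ^ 2) / C1^2 \<longrightarrow>
           measure M {w \<in> space M. maxnorm (adapted_gram M F X t w - emp_gram X t w)
                                    \<ge> phi0^2 / (32 * real s0 * nu * CX)}
           \<le> exp (- (real t * C1^2 / 2))"
proof -
  interpret prob_space M by (rule prob)
  have ctx_meas: "ctx t \<in> borel_measurable M" for t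
    using distributed_measurable[OF ctx_dens[of t]] by (simp add: measurable_cong_sets[OF refl sets_lborel])
  have mu_cont: "continuous_on UNIV mu"
    using DERIV_isCont[OF mu_deriv] by (intro continuous_at_imp_continuous_on) simp
  define C1' where "C1' = phi0\<^sup>2 / (256 * real s0 * nu * CX * xmax\<^sup>2)"
  have "0 \<le> nu"
    by (rule density_reflection_bound_nonneg[OF prob ctx_dens symm])
  then have "0 \<le> C1'"
    unfolding C1'_def using CX_pos by simp
  show ?thesis
  proof (cases "C1 = 0")
    case True
    then show ?thesis by simp
  next
    case False
    then have C1: "0 < C1" "C1 \<le> 1/2" "C1 \<le> C1'"
      using \<open>0 \<le> C1'\<close> unfolding C1_def C1'_def s0_def by auto
    then have "256 * real s0 * nu * CX * xmax\<^sup>2 \<noteq> 0"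
      unfolding C1'_def by (metis div_by_0 order.strict_trans2 less_irrefl)
    moreover obtain w where "w \<in> space M"
      using not_empty by blast
    then have "0 \<le> xmax"
      using xmax norm_ge_zero order_trans by blast
    ultimately have "0 < xmax" and threshold: "phi0\<^sup>2 / (32 * real s0 * nu * CX) = 8 * xmax\<^sup>2 * C1'"
      unfolding C1'_def by (auto simp: field_simps)
    then show ?thesis
      unfolding threshold d_def X_def F_def
      using chosen_gram_deviation_tail_le[where ctx = ctx and a = a and eps = eps and mu = mu,
          OF ctx_meas a_meas eps_meas mu_cont prob xmax _ C1]
      by blast
  qed
qed

end
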